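(* Let $g>0$, $\gamma>0$, and let $\hat\nu:\mathbb R\to[\nu_0,\nu_1]$ be a stretch-limiting constitutive function (independent of $s$) as in the context. For $b\in(\nu_0,\nu_1)$, let $N(0)\in\mathbb R$ be the unique number with $$b=\int_0^1\hat\nu(N(0)+g\gamma s)\,ds,$$ so that the vertical uniform string hanging from $\mathbf 0$ to $b\mathbf k$ has tension $N(s)=N(0)+g\gamma s$. Let $\epsilon\in(0,1)$. Then for all $\gamma>0$ sufficiently small (depending on $\epsilon$ and $\hat\nu$) the following holds. If $$\nu_1-(1-\epsilon)\frac{g\gamma}{2}\hat\nu_{N^-}(N_1)\le b<\nu_1,$$ then $N(0)>0$ and $\frac{N_1-N(0)}{g\gamma}\in(0,1)$ (i.e. the string is a union of an elongated extensible segment and an inextensible segment). Conversely, if $N(0)>0$ and $\frac{N_1-N(0)}{g\gamma}\in(0,1)$, then $$\nu_1-(1+\epsilon)\frac{g\gamma}{2}\hat\nu_{N^-}(N_1)\le b<\nu_1.$$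
   Context: Stretch-limited constitutive function: there are constants $N_0<0<N_1$ and $0<\nu_0<1<\nu_1$ with $\hat\nu(N)=\nu_0$ for $N\le N_0$, $\hat\nu(N)=\nu_1$ for $N\ge N_1$, $\hat\nu\in C^\infty([N_0,N_1];[\nu_0,\nu_1])$, $\hat\nu(0)=1$, and $\hat\nu'(N)\ge c>0$ on $[N_0,N_1]$. $\hat\nu_{N^-}(N_1)$ denotes the left derivative of $\hat\nu$ at $N_1$ (the derivative at $N_1$ of the restriction of $\hat\nu$ to $[N_0,N_1]$). The setting is a uniform vertical string of mass per unit reference length $\gamma$ with $\mathbf r(0)=\mathbf 0$, $\mathbf r(1)=b\mathbf k$, $\mathbf r=z\mathbf k$, stretch $z'(s)=\hat\nu(N(s))$ and tension $N(s)=N(0)+g\gamma s$; the stated integral equation is the condition $z(1)=b$, and existence/uniqueness of $N(0)$ for $b\in(\nu_0,\nu_1)$ holds because $N(0)\mapsto\int_0^1\hat\nu(N(0)+g\gamma s)ds$ is continuous and increasing on $[N_0-g\gamma,N_1]$ with values from $\nu_0$ to $\nu_1$. *)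

theory Defs
  imports "HOL-Analysis.Analysis"
begin

definition smooth_on_interval :: "(real \<Rightarrow> real) \<Rightarrow> real \<Rightarrow> real \<Rightarrow> bool" where
  "smooth_on_interval f a b \<longleftrightarrow>
     (\<exists>D :: nat \<Rightarrow> real \<Rightarrow> real.
        (\<forall>x\<in>{a..b}. D 0 x = f x) \<and>
        (\<forall>k. \<forall>x\<in>{a..b}. (D k has_real_derivative D (Suc k) x) (at x within {a..b})))"

definition stretch_limited ::
  "(real \<Rightarrow> real) \<Rightarrow> real \<Rightarrow> real \<Rightarrow> real \<Rightarrow> real \<Rightarrow> real \<Rightarrow> bool" where
  "stretch_limited nu N0 N1 nu0 nu1 c \<longleftrightarrow>
     N0 < 0 \<and> 0 < N1 \<and> 0 < nu0 \<and> nu0 < 1 \<and> 1 < nu1 \<and> 0 < c \<and>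
     (\<forall>N. N \<le> N0 \<longrightarrow> nu N = nu0) \<and>
     (\<forall>N. N1 \<le> N \<longrightarrow> nu N = nu1) \<and>
     smooth_on_interval nu N0 N1 \<and>
     (\<forall>N\<in>{N0..N1}. nu0 \<le> nu N \<and> nu N \<le> nu1) \<and>
     nu 0 = 1 \<and>
     (\<forall>N\<in>{N0..N1}. \<exists>d. (nu has_real_derivative d) (at N within {N0..N1}) \<and> c \<le> d)"

end

theory Submission
  imports Defs
begin

(* Write a = g \<gamma> and t = N1 - N(0). Since nu is differentiable from the left at N1 and
   constant nu1 beyond N1, for a small enough nu lies on [N1 - a, N1] between the lines through
   (N1, nu1) of slopes (1 - \<epsilon>/2) nu'(N1) and (1 + \<epsilon>/2) nu'(N1). So for 0 \<le> t \<le> a the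
   integrand s \<mapsto> nu (N(0) + a s) is squeezed between nu1 - k max 0 (t - a s) for these two
   slopes k, and that ramp integrates to nu1 - k t\<^sup>2 / (2 a). For 0 < t < a this gives
   nu1 - (1 + \<epsilon>) a nu'(N1) / 2 \<le> b < nu1. Conversely b < nu1 forces t > 0, while t \<ge> a
   would by monotonicity give b \<le> nu1 - (1 - \<epsilon>/2) a nu'(N1) / 2; and a \<le> N1 makes
   N(0) > N1 - a \<ge> 0. *)

lemma has_integral_ramp:
  fixes a t :: real
  assumes "0 < a" "0 \<le> t" "t \<le> a"
  shows "((\<lambda>s. max 0 (t - a * s)) has_integral t\<^sup>2 / (2 * a)) {0..1}"
proof -
  define s0 where "s0 = t / a"
  have s0: "0 \<le> s0" "s0 \<le> 1" "a * s0 = t"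
    using assms by (auto simp: s0_def)
  have "((\<lambda>s. t - a * s) has_integral ((\<lambda>s. t * s - a * s\<^sup>2 / 2) s0 - (\<lambda>s. t * s - a * s\<^sup>2 / 2) 0)) {0..s0}"
    by (intro fundamental_theorem_of_calculus s0(1))
      (auto intro!: derivative_eq_intros simp: has_real_derivative_iff_has_vector_derivative[symmetric])
  moreover have "(\<lambda>s. t * s - a * s\<^sup>2 / 2) s0 - (\<lambda>s. t * s - a * s\<^sup>2 / 2) 0 = t\<^sup>2 / (2 * a)"
    using assms s0(3) by (simp add: s0_def field_simps power2_eq_square)
  ultimately have "((\<lambda>s. t - a * s) has_integral t\<^sup>2 / (2 * a)) {0..s0}"
    by simp
  then have "((\<lambda>s. max 0 (t - a * s)) has_integral t\<^sup>2 / (2 * a)) {0..s0}"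
    by (rule has_integral_eq[rotated]) (use s0 assms in \<open>auto simp: mult_left_mono\<close>)
  moreover have "((\<lambda>s. max 0 (t - a * s)) has_integral 0) {s0..1}"
  proof (rule has_integral_eq[rotated])
    show "((\<lambda>s. 0) has_integral 0) {s0..1}" by simp
  qed (use s0 assms in \<open>auto simp: mult_left_mono\<close>)
  ultimately show ?thesis
    using has_integral_combine[OF s0(1,2)] by fastforce
qed

lemma integral_le_ramp:
  fixes nu :: "real \<Rightarrow> real"
  assumes "continuous_on UNIV nu" "\<And>y. N1 \<le> y \<Longrightarrow> nu y \<le> nu1"
    and "\<And>y. N1 - t \<le> y \<Longrightarrow> y \<le> N1 \<Longrightarrow> nu y \<le> nu1 - k * (N1 - y)"
    and "0 < a" "0 \<le> t" "t \<le> a"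
  shows "integral {0..1} (\<lambda>s. nu (N1 - t + a * s)) \<le> nu1 - k * t\<^sup>2 / (2 * a)"
proof -
  have ramp: "((\<lambda>s. nu1 - k * max 0 (t - a * s)) has_integral nu1 - k * t\<^sup>2 / (2 * a)) {0..1}"
    using has_integral_diff[OF has_integral_const_real
        has_integral_mult_right[OF has_integral_ramp[OF assms(4-6)]]]
    by simp
  have nu_int: "((\<lambda>s. nu (N1 - t + a * s)) has_integral integral {0..1} (\<lambda>s. nu (N1 - t + a * s))) {0..1}"
    by (intro integrable_integral integrable_continuous_interval continuous_on_compose2[OF assms(1)]
        continuous_intros) auto
  have pointwise: "nu (N1 - t + a * s) \<le> nu1 - k * max 0 (t - a * s)" if "s \<in> {0..1}" for s
  proof (cases "t \<le> a * s")
    case True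
    then show ?thesis
      using assms(2)[of "N1 - t + a * s"] by simp
  next
    case False
    have "0 \<le> a * s"
      using that \<open>0 < a\<close> by simp
    then show ?thesis
      using False assms(3)[of "N1 - t + a * s"] by simp
  qed
  show ?thesis
    using nu_int ramp pointwise by (rule has_integral_le)
qed

lemma integral_ge_ramp:
  fixes nu :: "real \<Rightarrow> real"
  assumes "continuous_on UNIV nu" "\<And>y. N1 \<le> y \<Longrightarrow> nu1 \<le> nu y"
    and "\<And>y. N1 - t \<le> y \<Longrightarrow> y \<le> N1 \<Longrightarrow> nu1 - K * (N1 - y) \<le> nu y"
    and "0 < a" "0 \<le> t" "t \<le> a"
  shows "nu1 - K * t\<^sup>2 / (2 * a) \<le> integral {0..1} (\<lambda>s. nu (N1 - t + a * s))"
proof -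
  have "integral {0..1} (\<lambda>s. - nu (N1 - t + a * s)) \<le> - nu1 - (- K) * t\<^sup>2 / (2 * a)"
  proof (rule integral_le_ramp[of "\<lambda>y. - nu y"])
    show "continuous_on UNIV (\<lambda>y. - nu y)"
      using assms(1) by (intro continuous_intros)
    show "- nu y \<le> - nu1 - (- K) * (N1 - y)" if "N1 - t \<le> y" "y \<le> N1" for y
      using assms(3)[OF that] by simp
  qed (use assms in auto)
  then show ?thesis
    by simp
qed

lemma integral_profile_saturated:
  fixes nu :: "real \<Rightarrow> real"
  assumes "\<And>y. N1 \<le> y \<Longrightarrow> nu y = nu1" "N1 \<le> NZ" "0 \<le> a"
  shows "integral {0..1} (\<lambda>s. nu (NZ + a * s)) = nu1"
proof -
  have "nu (NZ + a * s) = nu1" if "s \<in> {0..1}" for s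
  proof (rule assms(1))
    have "0 \<le> a * s"
      using assms(3) that by simp
    then show "N1 \<le> NZ + a * s"
      using assms(2) by linarith
  qed
  then have "integral {0..1} (\<lambda>s. nu (NZ + a * s)) = integral {0..1} (\<lambda>s::real. nu1)"
    by (rule integral_cong)
  then show ?thesis by simp
qed

lemma integral_profile_bounds_imp_window:
  fixes nu :: "real \<Rightarrow> real"
  assumes "continuous_on UNIV nu" "mono nu" and sat: "\<And>y. N1 \<le> y \<Longrightarrow> nu y = nu1"
    and upper: "\<And>y. N1 - a \<le> y \<Longrightarrow> y \<le> N1 \<Longrightarrow> nu y \<le> nu1 - k * (N1 - y)"
    and "0 < a"
    and b: "b = integral {0..1} (\<lambda>s. nu (NZ + a * s))" "nu1 - k * a / 2 < b" "b < nu1"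
  shows "N1 - a < NZ" "NZ < N1"
proof -
  show "NZ < N1"
  proof (rule ccontr)
    assume "\<not> NZ < N1"
    then have "b = nu1"
      unfolding b(1) using sat \<open>0 < a\<close> by (intro integral_profile_saturated) auto
    with b(3) show False by simp
  qed
  show "N1 - a < NZ"
  proof (rule ccontr)
    assume "\<not> N1 - a < NZ"
    have "b \<le> integral {0..1} (\<lambda>s. nu (N1 - a + a * s))"
      unfolding b(1) using \<open>\<not> N1 - a < NZ\<close>
      by (intro integral_le integrable_continuous_interval continuous_on_compose2[OF assms(1)]
          continuous_intros monoD[OF \<open>mono nu\<close>]) auto
    also have "\<dots> \<le> nu1 - k * a\<^sup>2 / (2 * a)"
      by (rule integral_le_ramp[OF assms(1)]) (use sat upper \<open>0 < a\<close> in auto)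
    finally show False
      using b(2) \<open>0 < a\<close> by (simp add: power2_eq_square)
  qed
qed

lemma window_imp_integral_profile_bounds:
  fixes nu :: "real \<Rightarrow> real"
  assumes "continuous_on UNIV nu" and sat: "\<And>y. N1 \<le> y \<Longrightarrow> nu y = nu1"
    and upper: "\<And>y. N1 - a \<le> y \<Longrightarrow> y \<le> N1 \<Longrightarrow> nu y \<le> nu1 - k * (N1 - y)"
    and lower: "\<And>y. N1 - a \<le> y \<Longrightarrow> y \<le> N1 \<Longrightarrow> nu1 - K * (N1 - y) \<le> nu y"
    and "0 < k" "0 \<le> K" "N1 - a < NZ" "NZ < N1"
    and b: "b = integral {0..1} (\<lambda>s. nu (NZ + a * s))"
  shows "nu1 - K * a / 2 \<le> b" "b < nu1"
proof -
  define t where "t = N1 - NZ"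
  have t: "0 < t" "t < a" "NZ = N1 - t"
    using assms(7,8) by (auto simp: t_def)
  have "t\<^sup>2 \<le> a\<^sup>2"
    using t by (intro power_mono) auto
  then have "nu1 - K * a / 2 \<le> nu1 - K * t\<^sup>2 / (2 * a)"
    using t \<open>0 \<le> K\<close> by (simp add: field_simps power2_eq_square mult_left_mono)
  also have "\<dots> \<le> b"
    unfolding b t(3) by (rule integral_ge_ramp[OF assms(1)]) (use sat t lower in auto)
  finally show "nu1 - K * a / 2 \<le> b" .
  have "b \<le> nu1 - k * t\<^sup>2 / (2 * a)"
    unfolding b t(3) by (rule integral_le_ramp[OF assms(1)]) (use sat t upper in auto)
  also have "\<dots> < nu1"
    using t \<open>0 < k\<close> by simp
  finally show "b < nu1" .
qed

lemma hanging_string_criterion: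
  fixes nu :: "real \<Rightarrow> real"
  assumes cont: "continuous_on UNIV nu" and mono: "mono nu" and sat: "\<And>y. N1 \<le> y \<Longrightarrow> nu y = nu1"
    and upper: "\<And>y. N1 - \<rho> \<le> y \<Longrightarrow> y \<le> N1 \<Longrightarrow> nu y \<le> nu1 - (1 - \<epsilon> / 2) * d * (N1 - y)"
    and lower: "\<And>y. N1 - \<rho> \<le> y \<Longrightarrow> y \<le> N1 \<Longrightarrow> nu1 - (1 + \<epsilon> / 2) * d * (N1 - y) \<le> nu y"
    and "\<rho> \<le> N1" "0 < d" "0 < \<epsilon>" "\<epsilon> < 1" "0 < a" "a \<le> \<rho>"
    and b: "b = integral {0..1} (\<lambda>s. nu (NZ + a * s))"
  shows "(nu1 - (1 - \<epsilon>) * (a / 2) * d \<le> b \<and> b < nu1 \<longrightarrow>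
            NZ > 0 \<and> 0 < (N1 - NZ) / a \<and> (N1 - NZ) / a < 1) \<and>
         (NZ > 0 \<and> 0 < (N1 - NZ) / a \<and> (N1 - NZ) / a < 1 \<longrightarrow>
            nu1 - (1 + \<epsilon>) * (a / 2) * d \<le> b \<and> b < nu1)"
proof -
  have upper_a: "nu y \<le> nu1 - (1 - \<epsilon> / 2) * d * (N1 - y)"
    and lower_a: "nu1 - (1 + \<epsilon> / 2) * d * (N1 - y) \<le> nu y" if "N1 - a \<le> y" "y \<le> N1" for y
    using upper[of y] lower[of y] that \<open>a \<le> \<rho>\<close> by simp_all
  have slopes: "0 < (1 - \<epsilon> / 2) * d" "0 \<le> (1 + \<epsilon> / 2) * d"
    using assms(7-9) by simp_all
  have slack: "nu1 - (1 - \<epsilon>) * (a / 2) * d = nu1 - (1 - \<epsilon> / 2) * d * a / 2 + \<epsilon> * d * a / 4"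
    "nu1 - (1 + \<epsilon> / 2) * d * a / 2 = nu1 - (1 + \<epsilon>) * (a / 2) * d + \<epsilon> * d * a / 4"
    by (simp_all add: field_simps)
  have "0 < \<epsilon> * d * a / 4"
    using assms(7,8,10) by simp
  have window: "0 < (N1 - NZ) / a \<and> (N1 - NZ) / a < 1 \<longleftrightarrow> N1 - a < NZ \<and> NZ < N1"
    using \<open>0 < a\<close> by (auto simp: zero_less_divide_iff divide_less_eq)
  show ?thesis
  proof (rule conjI; rule impI)
    assume "nu1 - (1 - \<epsilon>) * (a / 2) * d \<le> b \<and> b < nu1"
    then have "nu1 - (1 - \<epsilon> / 2) * d * a / 2 < b" "b < nu1"
      using slack(1) \<open>0 < \<epsilon> * d * a / 4\<close> by linarith+
    from integral_profile_bounds_imp_window[OF cont mono sat upper_a \<open>0 < a\<close> b this]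
    show "NZ > 0 \<and> 0 < (N1 - NZ) / a \<and> (N1 - NZ) / a < 1"
      using window \<open>a \<le> \<rho>\<close> \<open>\<rho> \<le> N1\<close> by auto
  next
    assume "NZ > 0 \<and> 0 < (N1 - NZ) / a \<and> (N1 - NZ) / a < 1"
    then have "N1 - a < NZ" "NZ < N1"
      using window by auto
    from window_imp_integral_profile_bounds[OF cont sat upper_a lower_a slopes this b]
    show "nu1 - (1 + \<epsilon>) * (a / 2) * d \<le> b \<and> b < nu1"
      using slack(2) \<open>0 < \<epsilon> * d * a / 4\<close> by auto
  qed
qed

lemma left_derivative_sandwich:
  fixes f :: "real \<Rightarrow> real"
  assumes "(f has_real_derivative d) (at x within S)" "0 < e"
  obtains \<delta> where "0 < \<delta>"
    "\<And>y. y \<in> S \<Longrightarrow> y \<le> x \<Longrightarrow> x - y < \<delta> \<Longrightarrow> f x - (d + e) * (x - y) \<le> f y"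
    "\<And>y. y \<in> S \<Longrightarrow> y \<le> x \<Longrightarrow> x - y < \<delta> \<Longrightarrow> f y \<le> f x - (d - e) * (x - y)"
proof -
  obtain \<delta> where "0 < \<delta>" and \<delta>:
    "\<And>y. y \<in> S \<Longrightarrow> norm (y - x) < \<delta> \<Longrightarrow> norm (f y - f x - d * (y - x)) \<le> e * norm (y - x)"
    using assms unfolding has_field_derivative_def has_derivative_within_alt by blast
  show ?thesis
  proof (rule that[OF \<open>0 < \<delta>\<close>])
    fix y
    assume "y \<in> S" "y \<le> x" "x - y < \<delta>"
    then have "\<bar>f y - f x - d * (y - x)\<bar> \<le> e * \<bar>y - x\<bar>"
      using \<delta>[of y] by simp
    moreover have "f y - f x - d * (y - x) = f y - (f x - d * (x - y))" "\<bar>y - x\<bar> = x - y"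
      using \<open>y \<le> x\<close> by (simp_all add: algebra_simps)
    ultimately have "\<bar>f y - (f x - d * (x - y))\<bar> \<le> e * (x - y)"
      by simp
    then show "f x - (d + e) * (x - y) \<le> f y" "f y \<le> f x - (d - e) * (x - y)"
      by (simp_all add: abs_le_iff algebra_simps)
  qed
qed

lemma stretch_limited_clamp:
  assumes "stretch_limited nu N0 N1 nu0 nu1 c"
  shows "nu x = nu (max N0 (min N1 x))"
  using assms unfolding stretch_limited_def
  by (cases "x \<le> N0"; cases "N1 \<le> x") (auto simp: max_def min_def)

lemma stretch_limited_continuous_on_interval:
  assumes "stretch_limited nu N0 N1 nu0 nu1 c"
  shows "continuous_on {N0..N1} nu"
  using assms DERIV_continuous unfolding stretch_limited_def continuous_on_eq_continuous_within
  by blast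

lemma stretch_limited_continuous:
  assumes "stretch_limited nu N0 N1 nu0 nu1 c"
  shows "continuous_on UNIV nu"
proof -
  have "N0 \<le> N1"
    using assms unfolding stretch_limited_def by linarith
  then have "continuous_on UNIV (nu \<circ> (\<lambda>x. max N0 (min N1 x)))"
    by (intro continuous_on_compose continuous_intros
        continuous_on_subset[OF stretch_limited_continuous_on_interval[OF assms]]) auto
  then show ?thesis
    using stretch_limited_clamp[OF assms] by (simp add: o_def)
qed

lemma stretch_limited_mono:
  assumes "stretch_limited nu N0 N1 nu0 nu1 c"
  shows "mono nu"
proof
  fix x y :: real
  assume "x \<le> y"
  define p q where "p = max N0 (min N1 x)" and "q = max N0 (min N1 y)"
  have pq: "N0 \<le> p" "p \<le> q" "q \<le> N1"
    using assms \<open>x \<le> y\<close> unfolding p_def q_def stretch_limited_def by auto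
  have "nu p \<le> nu q"
  proof (rule DERIV_nonneg_imp_increasing_open[OF pq(2)])
    fix z
    assume "p < z" "z < q"
    then have z: "z \<in> interior {N0..N1}"
      using pq by (simp add: interior_atLeastAtMost_real)
    then obtain d where "(nu has_real_derivative d) (at z within {N0..N1})" "c \<le> d"
      using assms interior_subset unfolding stretch_limited_def by blast
    moreover have "0 < c"
      using assms unfolding stretch_limited_def by linarith
    ultimately show "\<exists>d. (nu has_real_derivative d) (at z) \<and> 0 \<le> d"
      using at_within_interior[OF z] by (metis less_le_trans less_imp_le)
  next
    show "continuous_on {p..q} nu"
      using pq by (intro continuous_on_subset[OF stretch_limited_continuous_on_interval[OF assms]]) auto
  qed
  then show "nu x \<le> nu y"
    using stretch_limited_clamp[OF assms] unfolding p_def q_def by metis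
qed

lemma stretch_limited_derivative_ge:
  assumes "stretch_limited nu N0 N1 nu0 nu1 c"
    and "(nu has_real_derivative d) (at N1 within {N0..N1})"
  shows "c \<le> d"
proof -
  have "N0 < N1"
    using assms(1) unfolding stretch_limited_def by linarith
  then have "N1 \<in> {N0..N1}"
    by simp
  then obtain d' where d': "(nu has_real_derivative d') (at N1 within {N0..N1})" "c \<le> d'"
    using assms(1) unfolding stretch_limited_def by blast
  have "d = d'"
    using vector_derivative_unique_within_closed_interval[of N0 N1 N1 nu d d'] assms(2) d'(1) \<open>N0 < N1\<close>
    by (auto simp: has_real_derivative_iff_has_vector_derivative)
  with d'(2) show ?thesis by simp
qed

theorem proposition3p2:
  fixes nu :: "real \<Rightarrow> real" and N0 N1 nu0 nu1 c g \<epsilon> dN1 :: real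
  assumes "stretch_limited nu N0 N1 nu0 nu1 c"
    and "(nu has_real_derivative dN1) (at N1 within {N0..N1})"
    and "0 < g"
    and "0 < \<epsilon>" and "\<epsilon> < 1"
  shows "\<exists>\<gamma>0>0. \<forall>\<gamma> b NZ. 0 < \<gamma> \<and> \<gamma> < \<gamma>0 \<and> nu0 < b \<and> b < nu1 \<and>
            b = integral {0..1} (\<lambda>s. nu (NZ + g * \<gamma> * s)) \<longrightarrow>
           ((nu1 - (1 - \<epsilon>) * (g * \<gamma> / 2) * dN1 \<le> b \<and> b < nu1 \<longrightarrow>
               NZ > 0 \<and> 0 < (N1 - NZ) / (g * \<gamma>) \<and> (N1 - NZ) / (g * \<gamma>) < 1) \<and>
            (NZ > 0 \<and> 0 < (N1 - NZ) / (g * \<gamma>) \<and> (N1 - NZ) / (g * \<gamma>) < 1 \<longrightarrow>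
               nu1 - (1 + \<epsilon>) * (g * \<gamma> / 2) * dN1 \<le> b \<and> b < nu1))"
proof -
  have N: "N0 < N1" "0 < N1" "0 < c" and sat: "\<And>y. N1 \<le> y \<Longrightarrow> nu y = nu1"
    using assms(1) unfolding stretch_limited_def by auto
  have "0 < dN1"
    using stretch_limited_derivative_ge[OF assms(1,2)] N(3) by linarith
  then have "0 < \<epsilon> * dN1 / 2"
    using assms(4) by simp
  then obtain \<delta> where "0 < \<delta>"
    and lower_N1: "\<And>y. y \<in> {N0..N1} \<Longrightarrow> y \<le> N1 \<Longrightarrow> N1 - y < \<delta> \<Longrightarrow>
       nu N1 - (dN1 + \<epsilon> * dN1 / 2) * (N1 - y) \<le> nu y"
    and upper_N1: "\<And>y. y \<in> {N0..N1} \<Longrightarrow> y \<le> N1 \<Longrightarrow> N1 - y < \<delta> \<Longrightarrow>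
       nu y \<le> nu N1 - (dN1 - \<epsilon> * dN1 / 2) * (N1 - y)"
    by (rule left_derivative_sandwich[OF assms(2)]) blast
  define \<rho> where "\<rho> = min (\<delta> / 2) (min (N1 - N0) N1)"
  have "0 < \<rho>" "\<rho> \<le> N1"
    using \<open>0 < \<delta>\<close> N by (auto simp: \<rho>_def)
  have upper: "nu y \<le> nu1 - (1 - \<epsilon> / 2) * dN1 * (N1 - y)"
    and lower: "nu1 - (1 + \<epsilon> / 2) * dN1 * (N1 - y) \<le> nu y" if "N1 - \<rho> \<le> y" "y \<le> N1" for y
    using lower_N1[of y] upper_N1[of y] sat[of N1] that \<open>0 < \<delta>\<close> by (auto simp: \<rho>_def algebra_simps)
  note criterion = hanging_string_criterion[OF stretch_limited_continuous[OF assms(1)]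
      stretch_limited_mono[OF assms(1)] sat upper lower \<open>\<rho> \<le> N1\<close> \<open>0 < dN1\<close> assms(4,5)]
  have "0 < g * \<gamma> \<and> g * \<gamma> \<le> \<rho>" if "0 < \<gamma>" "\<gamma> < \<rho> / g" for \<gamma>
    using that assms(3) by (simp add: less_divide_eq mult.commute)
  moreover have "0 < \<rho> / g"
    using \<open>0 < \<rho>\<close> assms(3) by simp
  ultimately show ?thesis
    using criterion by blast
qed

end
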